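(* $$\sum_{n=0}^\infty \frac{\binom{2n}{n}}{(2n+1)(n+1)^2\, 2^{2n}} = 2\pi + 4\log 2 - 8.$$
   Context: $\binom{2n}{n}$ is the central binomial coefficient; $\log$ is the natural logarithm. *)

theory Defs
  imports Complex_Main
begin

end

theory Submission imports Defs "HOL-Analysis.Analysis" begin

text \<open>
  Write c(n) = (2n choose n) / 4^n, the coefficients of (1 - x) powr (-1/2). The partial
  fraction decomposition 1/((2n+1)(n+1)^2) = 4/(2n+1) - 2/(n+1) - 1/(n+1)^2 splits the sum
  into 4 S1 - 2 S2 - S3, where S1, S2, S3 are the sums of c(n)/(2n+1), c(n)/(n+1), c(n)/(n+1)^2.
  Integrating the generating function termwise over [0, x] with x < 1 gives
  sum c(n) x^(2n+1)/(2n+1) = arcsin x and sum c(n) x^(n+1)/(n+1) = 2 - 2 sqrt(1 - x);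
  dividing the latter by x and integrating again gives
  sum c(n) x^(n+1)/(n+1)^2 = 4 - 4 sqrt(1 - x) + 4 ln((1 + sqrt(1 - x))/2).
  As all coefficients are nonnegative, letting x tend to 1 from below is legitimate and
  yields S1 = pi/2, S2 = 2 and S3 = 4 - 4 ln 2.
\<close>

lemma sums_power_series_antiderivative:
  fixes g g' :: "real \<Rightarrow> real" and b :: "nat \<Rightarrow> real" and k :: nat
  assumes "0 < k" "0 \<le> r" "r < 1" and b_bound: "\<And>n. \<bar>b n\<bar> \<le> B"
    and series: "\<And>y. y \<in> {0..r} \<Longrightarrow> (\<lambda>n. b n * y^(k*n)) sums g' y"
    and deriv: "\<And>y. y \<in> {0..r} \<Longrightarrow> (g has_real_derivative g' y) (at y within {0..r})"
    and "g 0 = 0"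
  shows "(\<lambda>n. b n / (real k * real n + 1) * r^(k*n+1)) sums g r"
proof -
  let ?f = "\<lambda>n y. b n / (real k * real n + 1) * y^(k*n+1)"
  let ?f' = "\<lambda>n y. b n * y^(k*n)"
  have df: "(?f n has_real_derivative ?f' n y) (at y within {0..r})" for n y
  proof -
    have "0 < real k * real n + 1"
      by (intro add_nonneg_pos) simp_all
    have "((\<lambda>y. y^(k*n+1)) has_real_derivative (real k * real n + 1) * y^(k*n)) (at y within {0..r})"
      using DERIV_pow[of "k*n+1"] by (simp add: add.commute)
    from DERIV_cmult[OF this, of "b n / (real k * real n + 1)"] show ?thesis
      using \<open>0 < real k * real n + 1\<close> by simp
  qed
  have unif: "uniform_limit {0..r} (\<lambda>n y. \<Sum>i<n. ?f' i y) (\<lambda>y. \<Sum>i. ?f' i y) sequentially"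
  proof (rule Weierstrass_m_test)
    show "summable (\<lambda>n. B * r^n)"
      using assms by (intro summable_mult summable_geometric) simp
    show "norm (?f' n y) \<le> B * r^n" if "y \<in> {0..r}" for n y
    proof -
      have "y^(k*n) \<le> r^n"
        using that assms power_decreasing[of n "k*n" r] power_mono[of y r "k*n"] by auto
      then show ?thesis
        using that b_bound[of n] by (simp add: abs_mult mult_mono')
    qed
  qed
  obtain G where G: "\<And>y. y \<in> {0..r} \<Longrightarrow>
      (\<lambda>n. ?f n y) sums G y \<and> (G has_real_derivative (\<Sum>i. ?f' i y)) (at y within {0..r})"
    using has_field_derivative_series[OF convex_real_interval(5) df unif, of 0] \<open>0 \<le> r\<close>
    by force
  have "((\<lambda>y. G y - g y) has_real_derivative 0) (at y within {0..r})" if "y \<in> {0..r}" for y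
    using DERIV_diff[OF conjunct2[OF G[OF that]] deriv[OF that]] series[OF that]
    by (simp add: sums_iff)
  then obtain c where const: "\<forall>y\<in>{0..r}. G y - g y = c"
    using has_field_derivative_zero_constant[OF convex_real_interval(5)] by metis
  have "G 0 = 0"
    using G[of 0] \<open>0 \<le> r\<close> by (simp add: sums_iff)
  moreover have "G r - g r = G 0 - g 0"
    using const \<open>0 \<le> r\<close> by simp
  ultimately have "G r = g r"
    using \<open>g 0 = 0\<close> by simp
  then show ?thesis
    using G[of r] \<open>0 \<le> r\<close> by simp
qed

lemma nonneg_sums_of_tendsto_at_left_1:
  fixes a :: "nat \<Rightarrow> real" and e :: "nat \<Rightarrow> nat"
  assumes a_nonneg: "\<And>n. 0 \<le> a n"
    and series: "\<And>x. 0 < x \<Longrightarrow> x < 1 \<Longrightarrow> (\<lambda>n. a n * x^(e n)) sums g x"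
    and lim: "(g \<longlongrightarrow> L) (at_left 1)"
  shows "a sums L"
proof -
  have inside: "\<forall>\<^sub>F x in at_left (1::real). 0 < x \<and> x < 1"
    using eventually_at_left_real[of 0 "1::real"] by simp
  have partial_sums_le: "(\<Sum>n<N. a n) \<le> L" for N
  proof (rule tendsto_le[OF trivial_limit_at_left_real lim])
    have "((\<lambda>x. \<Sum>n<N. a n * x^(e n)) \<longlongrightarrow> (\<Sum>n<N. a n * 1^(e n))) (at_left 1)"
      by (intro tendsto_intros)
    then show "((\<lambda>x. \<Sum>n<N. a n * x^(e n)) \<longlongrightarrow> (\<Sum>n<N. a n)) (at_left 1)"
      by simp
    show "\<forall>\<^sub>F x in at_left 1. (\<Sum>n<N. a n * x^(e n)) \<le> g x"
      using inside
    proof (rule eventually_mono)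
      fix x :: real assume x: "0 < x \<and> x < 1"
      have "(\<Sum>n<N. a n * x^(e n)) \<le> (\<Sum>n. a n * x^(e n))"
        using series[of x] x a_nonneg by (intro sum_le_suminf) (auto simp: sums_iff)
      then show "(\<Sum>n<N. a n * x^(e n)) \<le> g x"
        using series[of x] x by (simp add: sums_iff)
    qed
  qed
  have "summable a"
    using a_nonneg partial_sums_le by (rule summableI_nonneg_bounded)
  have "L \<le> suminf a"
  proof (rule tendsto_le[OF trivial_limit_at_left_real tendsto_const lim])
    show "\<forall>\<^sub>F x in at_left 1. g x \<le> suminf a"
      using inside
    proof (rule eventually_mono)
      fix x :: real assume x: "0 < x \<and> x < 1"
      have "a n * x^(e n) \<le> a n" for n
        using x a_nonneg[of n] by (simp add: mult_left_le power_le_one)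
      then have "(\<Sum>n. a n * x^(e n)) \<le> suminf a"
        using series[of x] x \<open>summable a\<close> by (intro suminf_le) (auto simp: sums_iff)
      then show "g x \<le> suminf a"
        using series[of x] x by (simp add: sums_iff)
    qed
  qed
  moreover have "suminf a \<le> L"
    using \<open>summable a\<close> partial_sums_le by (rule suminf_le_const)
  ultimately show ?thesis
    using \<open>summable a\<close> by (simp add: sums_iff)
qed

definition cbinom :: "nat \<Rightarrow> real" where
  "cbinom n = real ((2*n) choose n) / 4^n"

lemma cbinom_nonneg: "0 \<le> cbinom n"
  by (simp add: cbinom_def)

lemma cbinom_le_1: "cbinom n \<le> 1"
proof -
  have "real ((2*n) choose n) \<le> 2^(2*n)"
    using binomial_le_pow2[of "2*n" n] by (metis of_nat_le_iff of_nat_numeral of_nat_power)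
  then show ?thesis by (simp add: cbinom_def power_mult)
qed

lemma cbinom_eq_gbinomial: "cbinom n = (-1)^n * ((-1/2) gchoose n)"
proof -
  have "fact (2*n) = (4::real)^n * pochhammer (1/2) n * fact n"
    using pochhammer_double[of "1/2::real" n] by (simp add: pochhammer_fact power_mult)
  then show ?thesis
    by (simp add: cbinom_def gbinomial_pochhammer binomial_fact field_simps)
qed

lemma sums_cbinom_power:
  assumes "\<bar>x\<bar> < 1"
  shows "(\<lambda>n. cbinom n * x^n) sums (1 / sqrt (1 - x))"
proof -
  have "(\<lambda>n. ((-1/2) gchoose n) * (-x)^n) sums (1 + (-x)) powr (-1/2)"
    using assms by (intro gen_binomial_real) simp
  moreover have "(1 + (-x)) powr (-1/2) = 1 / sqrt (1 - x)"
    using assms by (simp add: powr_minus_divide powr_half_sqrt)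
  ultimately show ?thesis
    by (simp add: cbinom_eq_gbinomial power_minus[of x] mult_ac)
qed

lemma sums_cbinom_arcsin:
  assumes "0 \<le> x" "x < 1"
  shows "(\<lambda>n. cbinom n / (2 * real n + 1) * x^(2*n+1)) sums arcsin x"
proof -
  have "(\<lambda>n. cbinom n / (real 2 * real n + 1) * x^(2*n+1)) sums arcsin x"
  proof (rule sums_power_series_antiderivative[where B=1 and k=2 and g'="\<lambda>y. 1 / sqrt (1 - y^2)"])
    show "\<bar>cbinom n\<bar> \<le> 1" for n
      using cbinom_nonneg cbinom_le_1 by simp
    show "(\<lambda>n. cbinom n * y^(2*n)) sums (1 / sqrt (1 - y^2))" if "y \<in> {0..x}" for y
      using sums_cbinom_power[of "y^2"] that assms by (simp add: power_mult abs_square_less_1)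
    show "(arcsin has_real_derivative 1 / sqrt (1 - y^2)) (at y within {0..x})" if "y \<in> {0..x}" for y
    proof -
      have "(arcsin has_real_derivative inverse (sqrt (1 - y^2))) (at y)"
        using that assms by (intro DERIV_arcsin) auto
      then show ?thesis by (simp add: has_field_derivative_at_within divide_inverse)
    qed
  qed (use assms in simp_all)
  then show ?thesis by simp
qed

lemma sums_cbinom_power_integral:
  assumes "0 \<le> x" "x < 1"
  shows "(\<lambda>n. cbinom n / (real n + 1) * x^(n+1)) sums (2 - 2 * sqrt (1 - x))"
proof -
  have "(\<lambda>n. cbinom n / (real 1 * real n + 1) * x^(1*n+1)) sums (2 - 2 * sqrt (1 - x))"
  proof (rule sums_power_series_antiderivative[where B=1 and k=1 and g'="\<lambda>y. 1 / sqrt (1 - y)"])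
    show "\<bar>cbinom n\<bar> \<le> 1" for n
      using cbinom_nonneg cbinom_le_1 by simp
    show "(\<lambda>n. cbinom n * y^(1*n)) sums (1 / sqrt (1 - y))" if "y \<in> {0..x}" for y
      using sums_cbinom_power[of y] that assms by simp
    show "((\<lambda>y. 2 - 2 * sqrt (1 - y)) has_real_derivative 1 / sqrt (1 - y)) (at y within {0..x})"
      if "y \<in> {0..x}" for y
    proof -
      have "y < 1" using that assms by simp
      then show ?thesis by (auto intro!: derivative_eq_intros simp: field_simps)
    qed
  qed (use assms in simp_all)
  then show ?thesis by simp
qed

lemma sums_cbinom_div_Suc_power:
  assumes "0 \<le> x" "x < 1"
  shows "(\<lambda>n. cbinom n / (real n + 1) * x^n) sums (2 / (1 + sqrt (1 - x)))"
proof (cases "x = 0")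
  case True
  then have "(\<lambda>n. cbinom n / (real n + 1) * x^n) = (\<lambda>n. if n = 0 then 1 else 0)"
    by (auto simp: fun_eq_iff cbinom_def)
  then show ?thesis
    using True sums_single[of 0 "\<lambda>_. 1::real"] by simp
next
  case False
  then have "0 < x" using assms by simp
  have "(\<lambda>n. cbinom n / (real n + 1) * x^(n+1) / x) sums ((2 - 2 * sqrt (1 - x)) / x)"
    using sums_cbinom_power_integral[OF assms] by (rule sums_divide)
  moreover have "(2 - 2 * sqrt (1 - x)) / x = 2 / (1 + sqrt (1 - x))"
  proof -
    define s where "s = sqrt (1 - x)"
    have "s * s = 1 - x" "0 \<le> s"
      using assms by (simp_all add: s_def)
    then have "(2 - 2 * s) / x = 2 / (1 + s)"
      using \<open>0 < x\<close> by (simp add: divide_simps) (simp add: algebra_simps)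
    then show ?thesis by (simp add: s_def)
  qed
  ultimately show ?thesis
    using \<open>0 < x\<close> by (simp add: power_Suc2)
qed

lemma sums_cbinom_div_Suc_power_integral:
  assumes "0 \<le> x" "x < 1"
  shows "(\<lambda>n. cbinom n / (real n + 1)^2 * x^(n+1))
           sums (4 - 4 * sqrt (1 - x) + 4 * ln ((1 + sqrt (1 - x)) / 2))"
proof -
  have series: "(\<lambda>n. cbinom n / (real n + 1) / (real 1 * real n + 1) * x^(1*n+1))
      sums (4 - 4 * sqrt (1 - x) + 4 * ln ((1 + sqrt (1 - x)) / 2))"
  proof (rule sums_power_series_antiderivative[where B=1 and k=1 and g'="\<lambda>y. 2 / (1 + sqrt (1 - y))"])
    show "\<bar>cbinom n / (real n + 1)\<bar> \<le> 1" for n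
      using cbinom_nonneg[of n] cbinom_le_1[of n] by (simp add: divide_le_eq)
    show "(\<lambda>n. cbinom n / (real n + 1) * y^(1*n)) sums (2 / (1 + sqrt (1 - y)))" if "y \<in> {0..x}" for y
      using sums_cbinom_div_Suc_power[of y] that assms by simp
    show "((\<lambda>y. 4 - 4 * sqrt (1 - y) + 4 * ln ((1 + sqrt (1 - y)) / 2)) has_real_derivative
        2 / (1 + sqrt (1 - y))) (at y within {0..x})" if "y \<in> {0..x}" for y
    proof -
      define s where "s = sqrt (1 - y)"
      have "0 < s" "0 < 1 + s" using that assms by (simp_all add: s_def add_pos_nonneg)
      have "((\<lambda>y. 4 - 4 * sqrt (1 - y) + 4 * ln ((1 + sqrt (1 - y)) / 2)) has_real_derivative
          2 / s - 2 / (s * (1 + s))) (at y within {0..x})"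
        using \<open>0 < s\<close> \<open>0 < 1 + s\<close> unfolding s_def
        by (auto intro!: derivative_eq_intros simp: divide_simps)
      moreover have "2 / s - 2 / (s * (1 + s)) = 2 / (1 + s)"
        using \<open>0 < s\<close> \<open>0 < 1 + s\<close> by (simp add: divide_simps)
      ultimately show ?thesis by (simp add: s_def)
    qed
  qed (use assms in simp_all)
  have "(\<lambda>n. cbinom n / (real n + 1) / (real 1 * real n + 1) * x^(1*n+1)) =
      (\<lambda>n. cbinom n / (real n + 1)^2 * x^(n+1))"
    by (simp add: fun_eq_iff power2_eq_square)
  with series show ?thesis by (simp only:)
qed

lemma sums_cbinom_div_odd: "(\<lambda>n. cbinom n / (2 * real n + 1)) sums (pi / 2)"
proof (rule nonneg_sums_of_tendsto_at_left_1[where e="\<lambda>n. 2*n+1" and g=arcsin])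
  show "0 \<le> cbinom n / (2 * real n + 1)" for n
    using cbinom_nonneg by simp
  show "(\<lambda>n. cbinom n / (2 * real n + 1) * x^(2*n+1)) sums arcsin x" if "0 < x" "x < 1" for x
    using that by (intro sums_cbinom_arcsin) auto
  have "continuous_on {0..1} arcsin"
    by (rule continuous_on_subset[OF continuous_on_arcsin']) auto
  then have "(arcsin \<longlongrightarrow> arcsin 1) (at_left (1::real))"
    by (rule continuous_on_Icc_at_leftD) simp
  then show "(arcsin \<longlongrightarrow> pi / 2) (at_left 1)"
    by simp
qed

lemma sums_cbinom_div_Suc: "(\<lambda>n. cbinom n / (real n + 1)) sums 2"
proof (rule nonneg_sums_of_tendsto_at_left_1[where e="\<lambda>n. n+1" and g="\<lambda>x. 2 - 2 * sqrt (1 - x)"])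
  show "0 \<le> cbinom n / (real n + 1)" for n
    using cbinom_nonneg by simp
  show "(\<lambda>n. cbinom n / (real n + 1) * x^(n+1)) sums (2 - 2 * sqrt (1 - x))" if "0 < x" "x < 1" for x
    using that by (intro sums_cbinom_power_integral) auto
  have "((\<lambda>x. 2 - 2 * sqrt (1 - x)) \<longlongrightarrow> 2 - 2 * sqrt (1 - 1)) (at_left (1::real))"
    by (intro tendsto_intros)
  then show "((\<lambda>x. 2 - 2 * sqrt (1 - x)) \<longlongrightarrow> 2) (at_left 1)"
    by simp
qed

lemma sums_cbinom_div_Suc_squared: "(\<lambda>n. cbinom n / (real n + 1)^2) sums (4 - 4 * ln 2)"
proof (rule nonneg_sums_of_tendsto_at_left_1[where e="\<lambda>n. n+1"
      and g="\<lambda>x. 4 - 4 * sqrt (1 - x) + 4 * ln ((1 + sqrt (1 - x)) / 2)"])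
  show "0 \<le> cbinom n / (real n + 1)^2" for n
    using cbinom_nonneg by simp
  show "(\<lambda>n. cbinom n / (real n + 1)^2 * x^(n+1)) sums
      (4 - 4 * sqrt (1 - x) + 4 * ln ((1 + sqrt (1 - x)) / 2))" if "0 < x" "x < 1" for x
    using that by (intro sums_cbinom_div_Suc_power_integral) auto
  have "((\<lambda>x. 4 - 4 * sqrt (1 - x) + 4 * ln ((1 + sqrt (1 - x)) / 2)) \<longlongrightarrow>
      4 - 4 * sqrt (1 - 1) + 4 * ln ((1 + sqrt (1 - 1)) / 2)) (at_left (1::real))"
    by (intro tendsto_intros) auto
  then show "((\<lambda>x. 4 - 4 * sqrt (1 - x) + 4 * ln ((1 + sqrt (1 - x)) / 2)) \<longlongrightarrow> 4 - 4 * ln 2) (at_left 1)"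
    by (simp add: ln_div)
qed

lemma partial_fraction_decomposition:
  fixes x :: "'a :: field"
  assumes "2*x + 1 \<noteq> 0" "x + 1 \<noteq> 0"
  shows "1 / ((2*x + 1) * (x + 1)^2) = 4 / (2*x + 1) - 2 / (x + 1) - 1 / (x + 1)^2"
  using assms by (simp add: divide_simps) (simp add: algebra_simps power2_eq_square)

theorem mainTheorem7:
  shows "(\<lambda>n::nat. real ((2*n) choose n) / ((2 * real n + 1) * (real n + 1)^2 * 2^(2*n)))
           sums (2 * pi + 4 * ln 2 - 8)"
proof -
  have "(\<lambda>n. 4 * (cbinom n / (2 * real n + 1)) - 2 * (cbinom n / (real n + 1)) - cbinom n / (real n + 1)^2)
      sums (4 * (pi / 2) - 2 * 2 - (4 - 4 * ln 2))"
    by (intro sums_diff sums_mult sums_cbinom_div_odd sums_cbinom_div_Suc sums_cbinom_div_Suc_squared)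
  moreover have "4 * (cbinom n / (2 * real n + 1)) - 2 * (cbinom n / (real n + 1)) - cbinom n / (real n + 1)^2
      = real ((2*n) choose n) / ((2 * real n + 1) * (real n + 1)^2 * 2^(2*n))" for n
  proof -
    have "real ((2*n) choose n) / ((2 * real n + 1) * (real n + 1)^2 * 2^(2*n))
        = cbinom n * (1 / ((2 * real n + 1) * (real n + 1)^2))"
      by (simp add: cbinom_def power_mult)
    also have "\<dots> = cbinom n * (4 / (2 * real n + 1) - 2 / (real n + 1) - 1 / (real n + 1)^2)"
      by (subst partial_fraction_decomposition) (auto simp: add_nonneg_eq_0_iff)
    finally show ?thesis
      by (simp add: algebra_simps)
  qed
  ultimately show ?thesis
    by simp
qed

end
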